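(* For all $a,b\ge2$: $D_2(a,b)=\binom{a}{2}\binom{b}{2}$; $D_3(2,b)=2\binom{b}{3}$; and $D_4(2,b)=3\binom{b}{3}+9\binom{b}{4}$.
   Context: A grid-labelled graph of type $(a,b)$ is a simple graph whose vertex set is the grid $[a]\times[b]$. An edge $\{(i,j),(k,l)\}$ is diagonal if $i\neq k$ and $j\neq l$. The partial transpose $\Gamma(G)$ is the grid-labelled graph with edge set $\{\{(k,j),(i,l)\}:\{(i,j),(k,l)\}\in E(G)\}$; $G$ satisfies the degree criterion if every vertex has the same degree in $G$ and in $\Gamma(G)$. $D_k(a,b)$ is the number of grid-labelled graphs of type $(a,b)$ with exactly $k$ edges, all diagonal, that satisfy the degree criterion. *)

theory Defs
  imports Main
begin

type_synonym vertex = "nat \<times> nat"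

definition grid :: "nat \<Rightarrow> nat \<Rightarrow> vertex set" where
  "grid a b = {1..a} \<times> {1..b}"

definition grid_graph :: "nat \<Rightarrow> nat \<Rightarrow> vertex set set \<Rightarrow> bool" where
  "grid_graph a b E \<longleftrightarrow> (\<forall>e\<in>E. e \<subseteq> grid a b \<and> card e = 2)"

definition diagonal_edge :: "vertex set \<Rightarrow> bool" where
  "diagonal_edge e \<longleftrightarrow> (\<exists>i j k l. e = {(i,j),(k,l)} \<and> i \<noteq> k \<and> j \<noteq> l)"

definition partial_transpose :: "vertex set set \<Rightarrow> vertex set set" where
  "partial_transpose E = {{(k,j),(i,l)} | i j k l. {(i,j),(k,l)} \<in> E}"

definition degree :: "vertex set set \<Rightarrow> vertex \<Rightarrow> nat" where
  "degree E v = card {e \<in> E. v \<in> e}"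

definition degree_criterion :: "nat \<Rightarrow> nat \<Rightarrow> vertex set set \<Rightarrow> bool" where
  "degree_criterion a b E \<longleftrightarrow>
     (\<forall>v\<in>grid a b. degree E v = degree (partial_transpose E) v)"

definition D :: "nat \<Rightarrow> nat \<Rightarrow> nat \<Rightarrow> nat" where
  "D k a b = card {E. grid_graph a b E \<and> card E = k \<and>
                      (\<forall>e\<in>E. diagonal_edge e) \<and> degree_criterion a b E}"

end

theory Submission
  imports Defs
begin

(*
  On a grid with two rows, a diagonal edge {(1,j),(2,l)} is an arc j -> l of a loopless digraph
  on [b], and the partial transpose reverses every arc; so the degree criterion says that every
  vertex has equal in- and out-degree.  Such Eulerian arc sets with three arcs are the directed
  triangles, and with four arcs they are the directed 4-cycles and the unions of two distinct
  2-cycles.  Both are counted by induction on b, sorting the sets that use the vertex b + 1 by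
  its neighbourhood.  For two edges on an a x b grid, every vertex of one edge must lie on the
  partial transpose of the other, so the graph consists of the two diagonals of a rectangle
  R x C with |R| = |C| = 2.
*)

section \<open>Eulerian arc sets\<close>

definition eulerian :: "('a \<times> 'a) set \<Rightarrow> bool" where
  "eulerian A \<longleftrightarrow> (\<forall>v. card (A `` {v}) = card (A\<inverse> `` {v}))"

definition cycle_arcs :: "'a list \<Rightarrow> ('a \<times> 'a) set" where
  "cycle_arcs xs = set (zip xs (rotate1 xs))"

lemma eulerian_converse: "eulerian (A\<inverse>) \<longleftrightarrow> eulerian A"
  unfolding eulerian_def by (metis converse_converse)

lemma card_Image_Diff_subset:
  assumes "finite R" "S \<subseteq> R"
  shows "card ((R - S) `` {v}) = card (R `` {v}) - card (S `` {v})"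
proof -
  have "(R - S) `` {v} = R `` {v} - S `` {v}" by blast
  moreover have "S `` {v} \<subseteq> R `` {v}" using assms(2) by blast
  ultimately show ?thesis using assms(1) by (simp add: card_Diff_subset finite_Image finite_subset)
qed

lemma eulerian_Diff:
  assumes "finite A" "C \<subseteq> A" "eulerian A" "eulerian C"
  shows "eulerian (A - C)"
proof -
  have "(A - C)\<inverse> = A\<inverse> - C\<inverse>" "C\<inverse> \<subseteq> A\<inverse>" using assms(2) by blast+
  then show ?thesis
    using assms unfolding eulerian_def by (simp add: card_Image_Diff_subset)
qed

lemma card_Image_Un_disjoint:
  assumes "finite R" "finite S" "R \<inter> S = {}"
  shows "card ((R \<union> S) `` {v}) = card (R `` {v}) + card (S `` {v})"
proof -
  have "R `` {v} \<inter> S `` {v} = {}" using assms(3) by blast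
  then show ?thesis using assms(1,2) by (simp add: Un_Image card_Un_disjoint finite_Image)
qed

lemma eulerian_Un:
  assumes "finite A" "finite B" "A \<inter> B = {}" "eulerian A" "eulerian B"
  shows "eulerian (A \<union> B)"
proof -
  have "A\<inverse> \<inter> B\<inverse> = {}" using assms(3) by blast
  then show ?thesis
    using assms unfolding eulerian_def by (simp add: converse_Un card_Image_Un_disjoint)
qed

lemma card_Image_zip:
  assumes "distinct xs" "length xs = length ys"
  shows "card (set (zip xs ys) `` {v}) = (if v \<in> set xs then 1 else 0)"
proof (cases "v \<in> set xs")
  case True
  then obtain i where i: "i < length xs" "xs ! i = v" by (meson in_set_conv_nth)
  have "set (zip xs ys) `` {v} = {ys ! i}"
    using i assms by (auto simp: in_set_zip nth_eq_iff_index_eq)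
  then show ?thesis using True by simp
next
  case False
  then show ?thesis by (auto dest: set_zip_leftD)
qed

lemma eulerian_cycle_arcs: "distinct xs \<Longrightarrow> eulerian (cycle_arcs xs)"
proof -
  assume "distinct xs"
  moreover have "(set (zip xs ys))\<inverse> = set (zip ys xs)" for ys :: "'a list"
    by (auto simp: zip_commute[of xs])
  ultimately show ?thesis
    unfolding eulerian_def cycle_arcs_def by (simp add: card_Image_zip)
qed

lemma card_cycle_arcs: "distinct xs \<Longrightarrow> card (cycle_arcs xs) = length xs"
  unfolding cycle_arcs_def by (simp add: distinct_card distinct_zipI1)

lemma rotate1_zip:
  "length xs = length ys \<Longrightarrow> rotate1 (zip xs ys) = zip (rotate1 xs) (rotate1 ys)"
  by (cases xs; cases ys) auto

lemma cycle_arcs_rotate: "cycle_arcs (rotate m xs) = cycle_arcs xs"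
proof (induction m)
  case (Suc m)
  have "cycle_arcs (rotate1 ys) = cycle_arcs ys" for ys :: "'a list"
    unfolding cycle_arcs_def by (metis length_rotate1 rotate1_zip set_rotate1)
  then show ?case using Suc by simp
qed simp

lemma cycle_arcs_rotate_to_front:
  assumes "v \<in> set xs"
  obtains ys where "cycle_arcs (v # ys) = cycle_arcs xs" "set (v # ys) = set xs"
    "length (v # ys) = length xs" "distinct xs \<Longrightarrow> distinct (v # ys)"
proof -
  obtain as bs where "xs = as @ v # bs" using split_list[OF assms] by blast
  then have "rotate (length as) xs = v # (bs @ as)" by (simp add: rotate_append)
  then show ?thesis
    using that[of "bs @ as"] cycle_arcs_rotate[of "length as" xs]
    by (metis distinct_rotate length_rotate set_rotate)
qed

lemma Field_cycle_arcs: "Field (cycle_arcs xs) = set xs"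
  unfolding cycle_arcs_def Field_def by (simp add: Domain_fst Range_snd flip: set_map)

lemma single_valued_cycle_arcs: "distinct xs \<Longrightarrow> single_valued (cycle_arcs xs)"
  unfolding single_valued_def cycle_arcs_def by (auto simp: in_set_zip nth_eq_iff_index_eq)

lemma nth_mem_cycle_arcs:
  "i < length xs \<Longrightarrow> (xs ! i, xs ! (Suc i mod length xs)) \<in> cycle_arcs xs"
  unfolding cycle_arcs_def in_set_zip by (auto simp: nth_rotate1)

lemma cycle_arcs_Cons_inj:
  assumes "distinct (v # xs)" "distinct (v # ys)" "cycle_arcs (v # xs) = cycle_arcs (v # ys)"
  shows "xs = ys"
proof -
  have len: "length xs = length ys" using assms card_cycle_arcs by (metis length_Cons nat.inject)
  have "(v # xs) ! i = (v # ys) ! i" if "i < length (v # xs)" for i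
    using that
  proof (induction i)
    case (Suc i)
    then have "(v # xs) ! i = (v # ys) ! i" by simp
    moreover have "((v # xs) ! i, (v # xs) ! Suc i) \<in> cycle_arcs (v # xs)"
      using nth_mem_cycle_arcs[of i "v # xs"] Suc.prems by simp
    moreover have "((v # ys) ! i, (v # ys) ! Suc i) \<in> cycle_arcs (v # xs)"
      using nth_mem_cycle_arcs[of i "v # ys"] Suc.prems len assms(3) by simp
    ultimately show ?case
      using single_valued_cycle_arcs[OF assms(1)] by (metis single_valuedD)
  qed simp
  then show ?thesis using len by (metis list.inject nth_equalityI length_Cons)
qed

definition offdiag :: "'a set \<Rightarrow> ('a \<times> 'a) set" where
  "offdiag S = S \<times> S - Id"

definition doubletons :: "'a set \<Rightarrow> 'a set set" where
  "doubletons S = {T. T \<subseteq> S \<and> card T = 2}"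

lemma card_doubletons: "finite S \<Longrightarrow> card (doubletons S) = card S choose 2"
  unfolding doubletons_def by (rule n_subsets)

lemma offdiag_mono: "S \<subseteq> T \<Longrightarrow> offdiag S \<subseteq> offdiag T"
  unfolding offdiag_def by auto

lemma mem_offdiag [simp]: "(x, y) \<in> offdiag S \<longleftrightarrow> x \<in> S \<and> y \<in> S \<and> x \<noteq> y"
  unfolding offdiag_def by auto

lemma finite_offdiag: "finite S \<Longrightarrow> finite (offdiag S)"
  unfolding offdiag_def by simp

lemma card_offdiag: "finite S \<Longrightarrow> card (offdiag S) = card S * (card S - 1)"
proof -
  assume "finite S"
  have "offdiag S = Sigma S (\<lambda>x. S - {x})" unfolding offdiag_def by auto
  with \<open>finite S\<close> show ?thesis by simp
qed

lemma irrefl_subset_offdiag: "A \<subseteq> offdiag S \<Longrightarrow> irrefl A"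
  unfolding irrefl_def by auto

lemma Field_subset_offdiag: "A \<subseteq> offdiag S \<Longrightarrow> Field A \<subseteq> S"
  unfolding Field_def by force

lemma cycle_arcs_subset_offdiag:
  assumes "distinct xs" "2 \<le> length xs"
  shows "cycle_arcs xs \<subseteq> offdiag (set xs)"
proof
  fix p assume "p \<in> cycle_arcs xs"
  then obtain i where i: "i < length xs" "fst p = xs ! i" "snd p = xs ! (Suc i mod length xs)"
    unfolding cycle_arcs_def in_set_zip by (auto simp: nth_rotate1)
  have j: "Suc i mod length xs < length xs" using i(1) by (intro mod_less_divisor) linarith
  have "Suc i mod length xs \<noteq> i"
  proof (cases "Suc i < length xs")
    case False
    then have "Suc i = length xs" using i(1) by simp
    then show ?thesis using assms(2) by simp
  qed simp
  then have "fst p \<noteq> snd p" using i j assms(1) by (simp add: nth_eq_iff_index_eq)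
  moreover have "fst p \<in> set xs" "snd p \<in> set xs" using i j by simp_all
  ultimately show "p \<in> offdiag (set xs)" by (cases p) simp
qed

lemma offdiag_pair: "x \<noteq> y \<Longrightarrow> offdiag {x, y} = cycle_arcs [x, y]"
  unfolding offdiag_def cycle_arcs_def by auto

lemma Field_offdiag_doubleton: "card S = 2 \<Longrightarrow> Field (offdiag S) = S"
  by (auto simp: card_2_iff Field_def)

lemma eulerian_offdiag_doubleton: "card S = 2 \<Longrightarrow> eulerian (offdiag S)"
  by (auto simp: card_2_iff offdiag_pair eulerian_cycle_arcs)

lemma offdiag_doubletons_disjoint:
  assumes "card S = 2" "card T = 2" "S \<noteq> T"
  shows "offdiag S \<inter> offdiag T = {}"
proof -
  have "S = {x, y}" if "(x, y) \<in> offdiag S" "card S = 2" for x y S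
    using that by (auto simp: card_2_iff)
  then show ?thesis using assms by fastforce
qed

lemma eulerian_successor:
  assumes "finite A" "eulerian A" "(x, y) \<in> A"
  obtains z where "(y, z) \<in> A"
proof -
  have "card (A\<inverse> `` {y}) \<noteq> 0" using assms(1,3) by (auto simp: finite_Image)
  then have "A `` {y} \<noteq> {}" using assms(2) unfolding eulerian_def by (metis card.empty)
  then show ?thesis using that by blast
qed

lemma eulerian_predecessor:
  assumes "finite A" "eulerian A" "(x, y) \<in> A"
  obtains w where "(w, x) \<in> A"
  using eulerian_successor[of "A\<inverse>" y x] assms by (auto simp: eulerian_converse)

lemma eulerian_Diff_cycle_arcs:
  assumes "finite A" "eulerian A" "distinct xs" "cycle_arcs xs \<subseteq> A"
  shows "eulerian (A - cycle_arcs xs)" "card (A - cycle_arcs xs) = card A - length xs"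
  using assms by (simp_all add: eulerian_Diff eulerian_cycle_arcs card_Diff_subset
      card_cycle_arcs finite_subset)

lemma not_eulerian_card_1:
  assumes "card A = 1" "irrefl A" shows "\<not> eulerian A"
proof
  assume "eulerian A"
  obtain p where "A = {p}" using assms(1) by (rule card_1_singletonE)
  moreover obtain x y where "p = (x, y)" by fastforce
  ultimately have A: "A = {(x, y)}" by simp
  then obtain z where "(y, z) \<in> A"
    using eulerian_successor[of A x y] \<open>eulerian A\<close> by auto
  then show False using A assms(2) by (simp add: irrefl_def)
qed

lemma not_eulerian_cycle_arcs_plus_arc:
  assumes "card A = Suc (length xs)" "irrefl A" "eulerian A" "distinct xs" "cycle_arcs xs \<subseteq> A"
  shows False
proof -
  have "finite A" using assms(1) card.infinite by force
  moreover have "irrefl (A - cycle_arcs xs)" using assms(2) by (auto simp: irrefl_def)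
  ultimately show False
    using eulerian_Diff_cycle_arcs[of A xs] assms not_eulerian_card_1[of "A - cycle_arcs xs"] by simp
qed

lemma eulerian_card_2:
  assumes "card A = 2" "irrefl A" "eulerian A"
  obtains x y where "x \<noteq> y" "A = cycle_arcs [x, y]"
proof -
  have fin: "finite A" using assms(1) by (metis card.infinite zero_neq_numeral)
  obtain x y where xy: "(x, y) \<in> A"
    using assms(1) by (metis card.empty ex_in_conv surj_pair zero_neq_numeral)
  obtain z where yz: "(y, z) \<in> A" using eulerian_successor[OF fin assms(3) xy] .
  have "x \<noteq> y" using xy assms(2) by (auto simp: irrefl_def)
  then have A: "A = {(x, y), (y, z)}"
    using card_subset_eq[OF fin, of "{(x, y), (y, z)}"] xy yz assms(1) by auto
  obtain w where "(w, x) \<in> A" using eulerian_predecessor[OF fin assms(3) xy] .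
  then have "z = x" using A \<open>x \<noteq> y\<close> by blast
  then have "A = cycle_arcs [x, y]" using A by (simp add: cycle_arcs_def)
  with \<open>x \<noteq> y\<close> show ?thesis by (rule that)
qed

lemma eulerian_card_3:
  assumes "card A = 3" "irrefl A" "eulerian A"
  obtains x y z where "distinct [x, y, z]" "A = cycle_arcs [x, y, z]"
proof -
  have fin: "finite A" using assms(1) by (metis card.infinite zero_neq_numeral)
  have loop: "a \<noteq> b" if "(a, b) \<in> A" for a b using that assms(2) by (auto simp: irrefl_def)
  have no_2_cycle: "(b, a) \<notin> A" if "(a, b) \<in> A" for a b
  proof
    assume "(b, a) \<in> A"
    then have "cycle_arcs [a, b] \<subseteq> A" "distinct [a, b]"
      using that loop by (auto simp: cycle_arcs_def)
    then show False using not_eulerian_cycle_arcs_plus_arc[of A "[a, b]"] assms by simp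
  qed
  obtain x y where xy: "(x, y) \<in> A"
    using assms(1) by (metis card.empty ex_in_conv surj_pair zero_neq_numeral)
  obtain z where yz: "(y, z) \<in> A" using eulerian_successor[OF fin assms(3) xy] .
  obtain w where zw: "(z, w) \<in> A" using eulerian_successor[OF fin assms(3) yz] .
  have "z \<noteq> x" "w \<noteq> y" using no_2_cycle xy yz zw by auto
  then have A: "A = {(x, y), (y, z), (z, w)}"
    using card_subset_eq[OF fin, of "{(x, y), (y, z), (z, w)}"] xy yz zw assms(1) loop[OF xy] loop[OF yz]
    by (auto simp: card_insert_if)
  obtain u where "(u, x) \<in> A" using eulerian_predecessor[OF fin assms(3) xy] .
  then have "w = x" using A loop[OF xy] \<open>z \<noteq> x\<close> by auto
  then have "distinct [x, y, z]" "A = cycle_arcs [x, y, z]"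
    using A loop[OF xy] loop[OF yz] \<open>z \<noteq> x\<close> by (auto simp: cycle_arcs_def)
  then show ?thesis by (rule that)
qed

lemma eulerian_card_4:
  assumes "card A = 4" "irrefl A" "eulerian A"
  obtains (cycle) x y z w where "distinct [x, y, z, w]" "A = cycle_arcs [x, y, z, w]"
  | (two_cycles) S T where "card S = 2" "card T = 2" "S \<noteq> T" "A = offdiag S \<union> offdiag T"
proof -
  have fin: "finite A" using assms(1) by (metis card.infinite zero_neq_numeral)
  have loop: "a \<noteq> b" if "(a, b) \<in> A" for a b using that assms(2) by (auto simp: irrefl_def)
  have irrefl_Diff: "irrefl (A - C)" for C using assms(2) by (auto simp: irrefl_def)
  have split_2_cycle: thesis if ab: "(a, b) \<in> A" "(b, a) \<in> A" for a b
  proof -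
    have sub: "cycle_arcs [a, b] \<subseteq> A" and dist: "distinct [a, b]"
      using ab loop by (auto simp: cycle_arcs_def)
    obtain u v where uv: "u \<noteq> v" "A - cycle_arcs [a, b] = cycle_arcs [u, v]"
      using eulerian_card_2[OF _ irrefl_Diff] eulerian_Diff_cycle_arcs[OF fin assms(3) dist sub]
        assms(1) by auto
    have "A = offdiag {a, b} \<union> offdiag {u, v}"
      using uv sub dist by (simp add: offdiag_pair) blast
    moreover have "{a, b} \<noteq> {u, v}"
    proof
      assume "{a, b} = {u, v}"
      then have "cycle_arcs [u, v] = cycle_arcs [a, b]"
        using dist uv(1) by (metis distinct_length_2_or_more offdiag_pair)
      then show False using uv by (auto simp: cycle_arcs_def)
    qed
    ultimately show thesis using two_cycles[of "{a, b}" "{u, v}"] dist uv(1) by simp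
  qed
  obtain x y where xy: "(x, y) \<in> A"
    using assms(1) by (metis card.empty ex_in_conv surj_pair zero_neq_numeral)
  obtain z where yz: "(y, z) \<in> A" using eulerian_successor[OF fin assms(3) xy] .
  obtain w where zw: "(z, w) \<in> A" using eulerian_successor[OF fin assms(3) yz] .
  consider "z = x" | "w = y" | "w = x" | "z \<noteq> x" "w \<noteq> y" "w \<noteq> x" by blast
  then show thesis
  proof cases
    case 1
    then show thesis using split_2_cycle xy yz by blast
  next
    case 2
    then show thesis using split_2_cycle yz zw by blast
  next
    case 3
    have "cycle_arcs [x, y, z] \<subseteq> A" "distinct [x, y, z]"
      using loop xy yz zw 3 by (auto simp: cycle_arcs_def)
    then show thesis using not_eulerian_cycle_arcs_plus_arc[of A "[x, y, z]"] assms by simp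
  next
    case 4
    obtain u where ux: "(u, x) \<in> A" using eulerian_predecessor[OF fin assms(3) xy] .
    have A: "A = {(x, y), (y, z), (z, w), (u, x)}"
      using card_subset_eq[OF fin, of "{(x, y), (y, z), (z, w), (u, x)}"] xy yz zw ux assms(1) 4
        loop[OF xy] loop[OF yz] loop[OF zw]
      by (auto simp: card_insert_if)
    obtain t where "(w, t) \<in> A" using eulerian_successor[OF fin assms(3) zw] .
    then have "u = w" using A 4 loop[OF zw] by auto
    then have "distinct [x, y, z, w]" "A = cycle_arcs [x, y, z, w]"
      using A 4 loop[OF xy] loop[OF yz] loop[OF zw] by (auto simp: cycle_arcs_def)
    then show thesis by (rule cycle)
  qed
qed

section \<open>Counting by the largest vertex\<close>

definition eulerian_digraphs :: "nat \<Rightarrow> nat \<Rightarrow> (nat \<times> nat) set set" where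
  "eulerian_digraphs k n = {A. A \<subseteq> offdiag {1..n} \<and> card A = k \<and> eulerian A}"

definition eulerian_digraphs_through_top :: "nat \<Rightarrow> nat \<Rightarrow> (nat \<times> nat) set set" where
  "eulerian_digraphs_through_top k n = {A \<in> eulerian_digraphs k (Suc n). Suc n \<in> Field A}"

lemma finite_eulerian_digraphs: "finite (eulerian_digraphs k n)"
proof -
  have "eulerian_digraphs k n \<subseteq> Pow (offdiag {1..n})" unfolding eulerian_digraphs_def by auto
  then show ?thesis by (simp add: finite_offdiag finite_subset)
qed

lemma eulerian_digraphs_0: "0 < k \<Longrightarrow> eulerian_digraphs k 0 = {}"
  unfolding eulerian_digraphs_def offdiag_def by auto

lemma subset_offdiag_Suc_iff:
  assumes "A \<subseteq> offdiag {1..Suc n}"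
  shows "A \<subseteq> offdiag {1..n} \<longleftrightarrow> Suc n \<notin> Field A"
proof
  assume "A \<subseteq> offdiag {1..n}"
  then show "Suc n \<notin> Field A" unfolding Field_def by force
next
  assume top: "Suc n \<notin> Field A"
  show "A \<subseteq> offdiag {1..n}"
  proof
    fix p assume "p \<in> A"
    moreover obtain x y where "p = (x, y)" by fastforce
    ultimately show "p \<in> offdiag {1..n}"
      using assms top FieldI1[of x y A] FieldI2[of x y A] by (fastforce simp: subset_iff le_Suc_eq)
  qed
qed

lemma card_eulerian_digraphs_Suc:
  "card (eulerian_digraphs k (Suc n)) =
     card (eulerian_digraphs k n) + card (eulerian_digraphs_through_top k n)"
proof -
  have "offdiag {1..n} \<subseteq> offdiag {1..Suc n}" by (simp add: offdiag_mono)
  then have "eulerian_digraphs k (Suc n) =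
      eulerian_digraphs k n \<union> eulerian_digraphs_through_top k n"
    "eulerian_digraphs k n \<inter> eulerian_digraphs_through_top k n = {}"
    using subset_offdiag_Suc_iff
    unfolding eulerian_digraphs_through_top_def eulerian_digraphs_def by blast+
  moreover have "finite (eulerian_digraphs_through_top k n)"
    unfolding eulerian_digraphs_through_top_def using finite_eulerian_digraphs by simp
  ultimately show ?thesis by (simp add: card_Un_disjoint finite_eulerian_digraphs)
qed

lemma cycle_arcs_start_at_top:
  assumes "cycle_arcs xs \<in> eulerian_digraphs_through_top k n" "distinct xs"
  obtains ys where "cycle_arcs (Suc n # ys) = cycle_arcs xs" "distinct (Suc n # ys)"
    "set ys \<subseteq> {1..n}" "length (Suc n # ys) = length xs"
proof -
  have "cycle_arcs xs \<subseteq> offdiag {1..Suc n}" "Suc n \<in> set xs"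
    using assms(1) Field_cycle_arcs[of xs]
    unfolding eulerian_digraphs_through_top_def eulerian_digraphs_def by auto
  then have "set xs \<subseteq> {1..Suc n}" by (metis Field_cycle_arcs Field_subset_offdiag)
  obtain ys where ys: "cycle_arcs (Suc n # ys) = cycle_arcs xs" "set (Suc n # ys) = set xs"
    "length (Suc n # ys) = length xs" "distinct (Suc n # ys)"
    using cycle_arcs_rotate_to_front[OF \<open>Suc n \<in> set xs\<close>] assms(2) by metis
  have "set ys \<subseteq> {1..n}" using ys(2,4) \<open>set xs \<subseteq> {1..Suc n}\<close> by (auto simp: le_Suc_eq)
  then show ?thesis using that ys by blast
qed

lemma cycle_arcs_mem_through_top:
  assumes "distinct (Suc n # ys)" "set ys \<subseteq> {1..n}" "ys \<noteq> []"
  shows "cycle_arcs (Suc n # ys) \<in> eulerian_digraphs_through_top (Suc (length ys)) n"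
proof -
  have "cycle_arcs (Suc n # ys) \<subseteq> offdiag (set (Suc n # ys))"
    using assms(1,3) by (intro cycle_arcs_subset_offdiag) (auto simp: Suc_le_eq)
  also have "\<dots> \<subseteq> offdiag {1..Suc n}" using assms(2) by (intro offdiag_mono) auto
  finally show ?thesis
    using assms(1) unfolding eulerian_digraphs_through_top_def eulerian_digraphs_def
    by (simp add: card_cycle_arcs eulerian_cycle_arcs Field_cycle_arcs)
qed

lemma eulerian_digraphs_through_top_3:
  "eulerian_digraphs_through_top 3 n = (\<lambda>(x, y). cycle_arcs [Suc n, x, y]) ` offdiag {1..n}"
proof (intro equalityI subsetI)
  fix A assume A: "A \<in> eulerian_digraphs_through_top 3 n"
  then have "card A = 3" "irrefl A" "eulerian A"
    unfolding eulerian_digraphs_through_top_def eulerian_digraphs_def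
    by (auto intro: irrefl_subset_offdiag)
  then obtain x y z where xyz: "distinct [x, y, z]" "A = cycle_arcs [x, y, z]"
    by (rule eulerian_card_3)
  obtain ys where ys: "cycle_arcs (Suc n # ys) = cycle_arcs [x, y, z]" "distinct (Suc n # ys)"
    "set ys \<subseteq> {1..n}" "length (Suc n # ys) = length [x, y, z]"
    by (rule cycle_arcs_start_at_top[of "[x, y, z]" 3 n]) (use A xyz in auto)
  then obtain p q where "ys = [p, q]" by (auto simp: length_Suc_conv)
  then show "A \<in> (\<lambda>(x, y). cycle_arcs [Suc n, x, y]) ` offdiag {1..n}" using ys xyz(2) by force
next
  fix A assume "A \<in> (\<lambda>(x, y). cycle_arcs [Suc n, x, y]) ` offdiag {1..n}"
  then obtain x y where "(x, y) \<in> offdiag {1..n}" "A = cycle_arcs [Suc n, x, y]" by auto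
  then show "A \<in> eulerian_digraphs_through_top 3 n"
    using cycle_arcs_mem_through_top[of n "[x, y]"] by (simp add: numeral_3_eq_3)
qed

lemma card_eulerian_digraphs_through_top_3:
  "card (eulerian_digraphs_through_top 3 n) = n * (n - 1)"
proof -
  have "inj_on (\<lambda>(x, y). cycle_arcs [Suc n, x, y]) (offdiag {1..n})"
  proof (rule inj_onI, clarify)
    fix x y x' y'
    assume "(x, y) \<in> offdiag {1..n}" "(x', y') \<in> offdiag {1..n}"
      "cycle_arcs [Suc n, x, y] = cycle_arcs [Suc n, x', y']"
    then show "x = x' \<and> y = y'" using cycle_arcs_Cons_inj[of "Suc n" "[x, y]" "[x', y']"] by auto
  qed
  then show ?thesis
    by (simp add: eulerian_digraphs_through_top_3 card_image card_offdiag)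
qed

lemma offdiag_Un_mem_through_top:
  assumes "S \<in> doubletons {1..Suc n}" "T \<in> doubletons {1..Suc n}" "S \<noteq> T" "Suc n \<in> S"
  shows "offdiag S \<union> offdiag T \<in> eulerian_digraphs_through_top 4 n"
proof -
  have card: "card S = 2" "card T = 2" and sub: "S \<subseteq> {1..Suc n}" "T \<subseteq> {1..Suc n}"
    using assms(1,2) by (auto simp: doubletons_def)
  have fin: "finite S" "finite T" using card by (auto intro: card_ge_0_finite)
  have disj: "offdiag S \<inter> offdiag T = {}" by (rule offdiag_doubletons_disjoint[OF card assms(3)])
  have "offdiag S \<union> offdiag T \<subseteq> offdiag {1..Suc n}" using sub by (simp add: offdiag_mono)
  moreover have "card (offdiag S \<union> offdiag T) = 4"
    using card fin disj by (simp add: card_Un_disjoint card_offdiag finite_offdiag)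
  moreover have "eulerian (offdiag S \<union> offdiag T)"
    using card fin disj by (simp add: eulerian_Un eulerian_offdiag_doubleton finite_offdiag)
  moreover have "Suc n \<in> Field (offdiag S \<union> offdiag T)"
    using card assms(4) by (simp add: Field_offdiag_doubleton)
  ultimately show ?thesis
    unfolding eulerian_digraphs_through_top_def eulerian_digraphs_def by simp
qed

lemma eulerian_digraphs_through_top_4:
  "eulerian_digraphs_through_top 4 n =
     (\<lambda>(x, y, z). cycle_arcs [Suc n, x, y, z]) ` (SIGMA x:{1..n}. offdiag ({1..n} - {x})) \<union>
     (\<lambda>P. \<Union>p\<in>P. offdiag {Suc n, p}) ` doubletons {1..n} \<union>
     (\<lambda>(x, T). offdiag {Suc n, x} \<union> offdiag T) ` ({1..n} \<times> doubletons {1..n})"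
  (is "_ = ?C \<union> ?B \<union> ?E")
proof (intro equalityI subsetI)
  fix A assume A: "A \<in> eulerian_digraphs_through_top 4 n"
  then have shape: "card A = 4" "irrefl A" "eulerian A" and sub: "A \<subseteq> offdiag {1..Suc n}"
    and top: "Suc n \<in> Field A"
    unfolding eulerian_digraphs_through_top_def eulerian_digraphs_def
    by (auto intro: irrefl_subset_offdiag)
  consider (cycle) x y z w where "distinct [x, y, z, w]" "A = cycle_arcs [x, y, z, w]"
    | (two_cycles) S T where "card S = 2" "card T = 2" "S \<noteq> T" "A = offdiag S \<union> offdiag T"
    by (rule eulerian_card_4[OF shape])
  then show "A \<in> ?C \<union> ?B \<union> ?E"
  proof cases
    case cycle
    obtain ys where ys: "cycle_arcs (Suc n # ys) = cycle_arcs [x, y, z, w]" "distinct (Suc n # ys)"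
      "set ys \<subseteq> {1..n}" "length (Suc n # ys) = length [x, y, z, w]"
      by (rule cycle_arcs_start_at_top[of "[x, y, z, w]" 4 n]) (use A cycle in auto)
    then obtain x y z where xyz: "ys = [x, y, z]" by (auto simp: length_Suc_conv)
    then have "(x, y, z) \<in> (SIGMA x:{1..n}. offdiag ({1..n} - {x}))" using ys(2,3) by auto
    moreover have "A = cycle_arcs [Suc n, x, y, z]" using ys(1) xyz cycle(2) by simp
    ultimately show ?thesis by (intro UnI1 rev_image_eqI[of "(x, y, z)"]) simp_all
  next
    case (two_cycles S T)
    have "Field A = S \<union> T" using two_cycles by (simp add: Field_offdiag_doubleton)
    moreover have "Field A \<subseteq> {1..Suc n}" using sub by (rule Field_subset_offdiag)
    ultimately have ST: "S \<subseteq> {1..Suc n}" "T \<subseteq> {1..Suc n}" "Suc n \<in> S \<or> Suc n \<in> T"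
      using top by auto
    have at_top: "A \<in> ?B \<union> ?E"
      if S'T': "card S' = 2" "card T' = 2" "S' \<noteq> T'" "A = offdiag S' \<union> offdiag T'"
        "S' \<subseteq> {1..Suc n}" "T' \<subseteq> {1..Suc n}" "Suc n \<in> S'" for S' T'
    proof -
      obtain p where S': "S' = {Suc n, p}" "p \<in> {1..n}"
        using S'T'(1,5,7) by (auto simp: card_2_iff le_Suc_eq insert_commute)
      show ?thesis
      proof (cases "Suc n \<in> T'")
        case True
        then obtain q where T': "T' = {Suc n, q}" "q \<in> {1..n}"
          using S'T'(2,6) by (auto simp: card_2_iff le_Suc_eq insert_commute)
        then have "{p, q} \<in> doubletons {1..n}" using S' S'T'(3) by (auto simp: doubletons_def)
        moreover have "A = (\<Union>t\<in>{p, q}. offdiag {Suc n, t})" using S'T'(4) S' T' by simp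
        ultimately show ?thesis by blast
      next
        case False
        then have "T' \<in> doubletons {1..n}" using S'T'(2,6) by (auto simp: doubletons_def le_Suc_eq)
        then have "(p, T') \<in> {1..n} \<times> doubletons {1..n}" using S' by simp
        moreover have "A = offdiag {Suc n, p} \<union> offdiag T'" using S'T'(4) S' by simp
        ultimately show ?thesis by force
      qed
    qed
    from ST(3) have "A \<in> ?B \<union> ?E"
    proof
      assume "Suc n \<in> S"
      then show ?thesis using at_top two_cycles ST(1,2) by simp
    next
      assume "Suc n \<in> T"
      then show ?thesis using at_top[of T S] two_cycles ST(1,2) by (simp add: Un_commute)
    qed
    then show ?thesis unfolding Un_assoc by (rule UnI2)
  qed
next
  fix A assume "A \<in> ?C \<union> ?B \<union> ?E"
  then consider (cycle) x y z where "x \<in> {1..n}" "(y, z) \<in> offdiag ({1..n} - {x})"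
      "A = cycle_arcs [Suc n, x, y, z]"
    | (double) P where "P \<in> doubletons {1..n}" "A = (\<Union>p\<in>P. offdiag {Suc n, p})"
    | (single) x T where "x \<in> {1..n}" "T \<in> doubletons {1..n}" "A = offdiag {Suc n, x} \<union> offdiag T"
    by (elim UnE imageE) auto
  then show "A \<in> eulerian_digraphs_through_top 4 n"
  proof cases
    case cycle
    then show ?thesis using cycle_arcs_mem_through_top[of n "[x, y, z]"] by (simp add: eval_nat_numeral)
  next
    case double
    then obtain p q where "P = {p, q}" "p \<noteq> q" "p \<in> {1..n}" "q \<in> {1..n}"
      by (auto simp: doubletons_def card_2_iff)
    then show ?thesis using double offdiag_Un_mem_through_top[of "{Suc n, p}" n "{Suc n, q}"]
      by (auto simp: doubletons_def doubleton_eq_iff)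
  next
    case single
    then show ?thesis using offdiag_Un_mem_through_top[of "{Suc n, x}" n T]
      by (force simp: doubletons_def)
  qed
qed

lemma card_four_cycles_through_top:
  "card ((\<lambda>(x, y, z). cycle_arcs [Suc n, x, y, z]) ` (SIGMA x:{1..n}. offdiag ({1..n} - {x})))
    = n * ((n - 1) * (n - 2))"
proof -
  let ?triples = "SIGMA x:{1..n}. offdiag ({1..n} - {x})"
  have "inj_on (\<lambda>(x, y, z). cycle_arcs [Suc n, x, y, z]) ?triples"
  proof (rule inj_onI)
    fix s t assume st: "s \<in> ?triples" "t \<in> ?triples"
      "(\<lambda>(x, y, z). cycle_arcs [Suc n, x, y, z]) s = (\<lambda>(x, y, z). cycle_arcs [Suc n, x, y, z]) t"
    obtain x y z x' y' z' where "s = (x, y, z)" "t = (x', y', z')" by (metis prod_cases3)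
    then show "s = t" using st cycle_arcs_Cons_inj[of "Suc n" "[x, y, z]" "[x', y', z']"] by auto
  qed
  moreover have "card ?triples = (\<Sum>x\<in>{1..n}. card (offdiag ({1..n} - {x})))"
    by (simp add: card_SigmaI finite_offdiag)
  moreover have "\<dots> = (\<Sum>x\<in>{1..n}. (n - 1) * (n - 2))"
    by (rule sum.cong) (simp_all add: card_offdiag numeral_2_eq_2)
  ultimately show ?thesis by (simp add: card_image)
qed

lemma card_eulerian_digraphs_through_top_4:
  "card (eulerian_digraphs_through_top 4 n) = n * ((n - 1) * (n - 2)) + (n choose 2) + n * (n choose 2)"
proof -
  define cyc where "cyc = (\<lambda>(x, y, z). cycle_arcs [Suc n, x, y, z])"
  define dbl where "dbl = (\<lambda>P. \<Union>p\<in>P. offdiag {Suc n, p})"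
  define sgl where "sgl = (\<lambda>(x, T). offdiag {Suc n, x} \<union> offdiag (T :: nat set))"
  define triples where "triples = (SIGMA x:{1..n}. offdiag ({1..n} - {x}))"
  define pairs where "pairs = doubletons {1..n}"
  have pairs: "T \<subseteq> {1..n}" "card T = 2" "Suc n \<notin> T" if "T \<in> pairs" for T
    using that by (auto simp: pairs_def doubletons_def)
  text \<open>The three families are told apart by the arcs at the new vertex \<open>Suc n\<close>.\<close>
  have succ_cyc: "cyc t `` {Suc n} = {fst t}" "(fst t, Suc n) \<notin> cyc t" if "t \<in> triples" for t
    using that by (auto simp: cyc_def triples_def cycle_arcs_def split: prod.splits)
  have succ_dbl: "dbl P `` {Suc n} = P" if "P \<in> pairs" for P
    using pairs[OF that] by (auto simp: dbl_def)
  have succ_sgl: "sgl t `` {Suc n} = {fst t}" "(fst t, Suc n) \<in> sgl t" if "t \<in> {1..n} \<times> pairs" for t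
    using that pairs by (auto simp: sgl_def split: prod.splits)
  have inj_dbl: "inj_on dbl pairs" by (rule inj_onI) (metis succ_dbl)
  have inj_sgl: "inj_on sgl ({1..n} \<times> pairs)"
  proof (rule inj_onI)
    fix s t assume st: "s \<in> {1..n} \<times> pairs" "t \<in> {1..n} \<times> pairs" "sgl s = sgl t"
    have rest: "sgl (x, T) - offdiag {Suc n, x} = offdiag T" if "(x, T) \<in> {1..n} \<times> pairs" for x T
      using that pairs by (auto simp: sgl_def)
    obtain x T x' T' where xT: "s = (x, T)" "t = (x', T')" by fastforce
    have x: "x = x'" using succ_sgl(1)[OF st(1)] succ_sgl(1)[OF st(2)] st(3) xT by simp
    then have "offdiag T = offdiag T'" using rest st xT by metis
    then have "T = T'" using st xT pairs(2) by (metis Field_offdiag_doubleton mem_Sigma_iff)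
    then show "s = t" using x xT by simp
  qed
  have "cyc s \<noteq> dbl P" if "s \<in> triples" "P \<in> pairs" for s P
    using succ_cyc(1)[OF that(1)] succ_dbl[OF that(2)] pairs(2)[OF that(2)] by force
  moreover have "cyc s \<noteq> sgl t" if "s \<in> triples" "t \<in> {1..n} \<times> pairs" for s t
    using succ_cyc[OF that(1)] succ_sgl[OF that(2)] by force
  moreover have "dbl P \<noteq> sgl t" if "P \<in> pairs" "t \<in> {1..n} \<times> pairs" for P t
    using succ_dbl[OF that(1)] succ_sgl(1)[OF that(2)] pairs(2)[OF that(1)] by force
  ultimately have disj: "cyc ` triples \<inter> dbl ` pairs = {}"
    "(cyc ` triples \<union> dbl ` pairs) \<inter> sgl ` ({1..n} \<times> pairs) = {}"
    by blast+
  have "card (cyc ` triples) = n * ((n - 1) * (n - 2))"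
    unfolding cyc_def triples_def by (rule card_four_cycles_through_top)
  moreover have "card pairs = n choose 2" unfolding pairs_def by (simp add: card_doubletons)
  moreover have "finite triples" "finite pairs"
    unfolding triples_def pairs_def doubletons_def by (simp_all add: finite_offdiag)
  ultimately show ?thesis
    using inj_dbl inj_sgl disj
    unfolding eulerian_digraphs_through_top_4 cyc_def[symmetric] dbl_def[symmetric]
      sgl_def[symmetric] triples_def[symmetric] pairs_def[symmetric]
    by (simp add: card_Un_disjoint card_image card_cartesian_product)
qed

lemma two_mult_choose_two: "2 * (n choose 2) = n * (n - 1)"
  using times_binomial_minus1_eq[of 2 n] by simp

lemma six_mult_choose_three: "6 * (n choose 3) = n * ((n - 1) * (n - 2))"
proof -
  have "6 * (n choose 3) = n * (2 * ((n - 1) choose 2))"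
    using times_binomial_minus1_eq[of 3 n] by simp
  also have "\<dots> = n * ((n - 1) * (n - 2))"
    using two_mult_choose_two[of "n - 1"] by (simp add: numeral_2_eq_2)
  finally show ?thesis .
qed

lemma card_eulerian_digraphs_3: "card (eulerian_digraphs 3 n) = 2 * (n choose 3)"
proof (induction n)
  case (Suc n)
  have "Suc n choose 3 = (n choose 2) + (n choose 3)" by (simp add: numeral_3_eq_3 numeral_2_eq_2)
  then show ?case
    using Suc card_eulerian_digraphs_Suc[of 3 n] card_eulerian_digraphs_through_top_3[of n]
      two_mult_choose_two[of n] by simp
qed (simp add: eulerian_digraphs_0)

lemma card_eulerian_digraphs_4: "card (eulerian_digraphs 4 n) = 3 * (n choose 3) + 9 * (n choose 4)"
proof (induction n)
  case (Suc n)
  have "Suc n choose 3 = (n choose 2) + (n choose 3)" by (simp add: numeral_3_eq_3 numeral_2_eq_2)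
  moreover have "Suc n choose 4 = (n choose 3) + (n choose 4)" by (simp add: eval_nat_numeral)
  moreover have "n * (n * (n - 1)) = n * ((n - 1) * (n - 2)) + 2 * (n * (n - 1))"
  proof (cases "n < 2")
    case False
    then obtain m where "n = m + 2" by (metis add.commute le_Suc_ex not_less)
    then show ?thesis by (simp add: algebra_simps)
  qed (auto simp: less_2_cases_iff)
  moreover have "2 * (n * (n choose 2)) = n * (n * (n - 1))"
    using two_mult_choose_two[of n] by (metis mult.left_commute)
  ultimately show ?case
    using Suc card_eulerian_digraphs_Suc[of 4 n] card_eulerian_digraphs_through_top_4[of n]
      two_mult_choose_two[of n] six_mult_choose_three[of n]
    by linarith
qed (simp add: eulerian_digraphs_0)

section \<open>Two-row grids\<close>

definition arc_edge :: "nat \<times> nat \<Rightarrow> vertex set" where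
  "arc_edge p = {(1, fst p), (2, snd p)}"

lemma inj_arc_edge: "inj arc_edge"
  by (rule injI) (auto simp: arc_edge_def doubleton_eq_iff prod_eq_iff)

lemma partial_transpose_arc_edges: "partial_transpose (arc_edge ` A) = arc_edge ` A\<inverse>"
proof (intro equalityI subsetI)
  fix e assume "e \<in> partial_transpose (arc_edge ` A)"
  then obtain i j k l p q where e: "e = {(k, j), (i, l)}" and "(p, q) \<in> A"
    and "{(i, j), (k, l)} = {(1, p), (2, q)}"
    unfolding partial_transpose_def arc_edge_def by auto
  then have "e = arc_edge (q, p)" "(q, p) \<in> A\<inverse>" unfolding arc_edge_def by (auto simp: doubleton_eq_iff)
  then show "e \<in> arc_edge ` A\<inverse>" by blast
next
  fix e assume "e \<in> arc_edge ` A\<inverse>"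
  then obtain p q where pq: "(p, q) \<in> A" "e = arc_edge (q, p)" by auto
  have "{(1, p), (2, q)} \<in> arc_edge ` A" using pq(1) unfolding arc_edge_def by force
  then have "{(2, p), (1, q)} \<in> partial_transpose (arc_edge ` A)"
    unfolding partial_transpose_def by blast
  then show "e \<in> partial_transpose (arc_edge ` A)" using pq(2) by (simp add: arc_edge_def insert_commute)
qed

lemma degree_arc_edges:
  "degree (arc_edge ` A) (1, v) = card (A `` {v})" "degree (arc_edge ` A) (2, v) = card (A\<inverse> `` {v})"
proof -
  have "{e \<in> arc_edge ` A. (1, v) \<in> e} = arc_edge ` (Pair v ` (A `` {v}))"
    "{e \<in> arc_edge ` A. (2, v) \<in> e} = arc_edge ` ((\<lambda>u. (u, v)) ` (A\<inverse> `` {v}))"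
    unfolding arc_edge_def by force+
  then show "degree (arc_edge ` A) (1, v) = card (A `` {v})"
    "degree (arc_edge ` A) (2, v) = card (A\<inverse> `` {v})"
    unfolding degree_def using inj_arc_edge
    by (simp_all add: card_image inj_on_subset inj_on_def)
qed

lemma degree_criterion_arc_edges:
  assumes "A \<subseteq> offdiag {1..b}"
  shows "degree_criterion 2 b (arc_edge ` A) \<longleftrightarrow> eulerian A"
proof -
  have grid: "grid 2 b = {1, 2} \<times> {1..b}" unfolding grid_def by auto
  have "degree_criterion 2 b (arc_edge ` A) \<longleftrightarrow>
      (\<forall>v\<in>{1..b}. card (A `` {v}) = card (A\<inverse> `` {v}))"
    unfolding degree_criterion_def partial_transpose_arc_edges grid
    using degree_arc_edges[of A] degree_arc_edges[of "A\<inverse>"] by auto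
  moreover have "A `` {v} = {}" "A\<inverse> `` {v} = {}" if "v \<notin> {1..b}" for v
    using assms that by auto
  ultimately show ?thesis unfolding eulerian_def by (metis card.empty)
qed

lemma diagonal_edge_two_rows:
  assumes "e \<subseteq> grid 2 b" "diagonal_edge e"
  obtains p where "p \<in> offdiag {1..b}" "e = arc_edge p"
proof -
  obtain i j k l where e: "e = {(i, j), (k, l)}" "i \<noteq> k" "j \<noteq> l"
    using assms(2) unfolding diagonal_edge_def by blast
  then have "i \<in> {1, 2}" "k \<in> {1, 2}" "j \<in> {1..b}" "l \<in> {1..b}"
    using assms(1) unfolding grid_def by auto
  then consider "i = 1" "k = 2" | "i = 2" "k = 1" using e(2) by auto
  then show ?thesis
  proof cases
    case 1
    then show ?thesis using that[of "(j, l)"] e \<open>j \<in> {1..b}\<close> \<open>l \<in> {1..b}\<close>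
      by (simp add: arc_edge_def)
  next
    case 2
    then show ?thesis using that[of "(l, j)"] e \<open>j \<in> {1..b}\<close> \<open>l \<in> {1..b}\<close>
      by (simp add: arc_edge_def insert_commute)
  qed
qed

lemma arc_edge_diagonal:
  assumes "p \<in> offdiag {1..b}"
  shows "arc_edge p \<subseteq> grid 2 b" "card (arc_edge p) = 2" "diagonal_edge (arc_edge p)"
proof -
  obtain j l where p: "p = (j, l)" "j \<in> {1..b}" "l \<in> {1..b}" "j \<noteq> l" using assms by (cases p) auto
  then show "arc_edge p \<subseteq> grid 2 b" "card (arc_edge p) = 2"
    unfolding arc_edge_def grid_def by auto
  show "diagonal_edge (arc_edge p)"
    unfolding diagonal_edge_def arc_edge_def using p
    by (intro exI[of _ 1] exI[of _ j] exI[of _ 2] exI[of _ l]) simp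
qed

lemma card_arc_edges: "card (arc_edge ` A) = card A"
  using inj_arc_edge by (simp add: card_image inj_on_subset)

lemma diagonal_graph_two_rows:
  assumes "grid_graph 2 b E" "\<forall>e\<in>E. diagonal_edge e"
  obtains A where "A \<subseteq> offdiag {1..b}" "E = arc_edge ` A"
proof -
  have arc: "\<exists>p\<in>offdiag {1..b}. e = arc_edge p" if "e \<in> E" for e
  proof -
    have "e \<subseteq> grid 2 b" "diagonal_edge e" using assms that unfolding grid_graph_def by auto
    then obtain p where "p \<in> offdiag {1..b}" "e = arc_edge p" by (rule diagonal_edge_two_rows)
    then show ?thesis by blast
  qed
  have "E \<subseteq> arc_edge ` (arc_edge -` E)"
  proof
    fix e assume "e \<in> E"
    moreover obtain p where "e = arc_edge p" using arc[OF \<open>e \<in> E\<close>] by blast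
    ultimately show "e \<in> arc_edge ` (arc_edge -` E)" by simp
  qed
  then have E: "E = arc_edge ` (arc_edge -` E)" by (simp add: image_vimage_subset subset_antisym)
  have "arc_edge -` E \<subseteq> offdiag {1..b}"
  proof
    fix p assume "p \<in> arc_edge -` E"
    then obtain q where "q \<in> offdiag {1..b}" "arc_edge p = arc_edge q" using arc[of "arc_edge p"] by auto
    then show "p \<in> offdiag {1..b}" using inj_arc_edge by (metis injD)
  qed
  then show ?thesis using E by (rule that)
qed

lemma grid_graph_arc_edges:
  assumes "A \<subseteq> offdiag {1..b}"
  shows "grid_graph 2 b (arc_edge ` A)" "\<forall>e\<in>arc_edge ` A. diagonal_edge e"
proof -
  have "arc_edge p \<subseteq> grid 2 b \<and> card (arc_edge p) = 2 \<and> diagonal_edge (arc_edge p)"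
    if "p \<in> A" for p
    using arc_edge_diagonal[of p b] that assms by blast
  then show "grid_graph 2 b (arc_edge ` A)" "\<forall>e\<in>arc_edge ` A. diagonal_edge e"
    unfolding grid_graph_def by blast+
qed

lemma D_two_rows_eq_card_eulerian_digraphs: "D k 2 b = card (eulerian_digraphs k b)"
proof -
  have "{E. grid_graph 2 b E \<and> card E = k \<and> (\<forall>e\<in>E. diagonal_edge e) \<and> degree_criterion 2 b E}
      = (\<lambda>A. arc_edge ` A) ` eulerian_digraphs k b"
  proof (intro equalityI subsetI)
    fix E assume E: "E \<in> {E. grid_graph 2 b E \<and> card E = k \<and> (\<forall>e\<in>E. diagonal_edge e) \<and>
      degree_criterion 2 b E}"
    then obtain A where "A \<subseteq> offdiag {1..b}" "E = arc_edge ` A"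
      using diagonal_graph_two_rows by blast
    then show "E \<in> (\<lambda>A. arc_edge ` A) ` eulerian_digraphs k b"
      using E degree_criterion_arc_edges card_arc_edges unfolding eulerian_digraphs_def by auto
  next
    fix E assume "E \<in> (\<lambda>A. arc_edge ` A) ` eulerian_digraphs k b"
    then obtain A where A: "A \<subseteq> offdiag {1..b}" "card A = k" "eulerian A" "E = arc_edge ` A"
      unfolding eulerian_digraphs_def by auto
    then show "E \<in> {E. grid_graph 2 b E \<and> card E = k \<and> (\<forall>e\<in>E. diagonal_edge e) \<and>
      degree_criterion 2 b E}"
      using grid_graph_arc_edges[OF A(1)] degree_criterion_arc_edges[OF A(1)] card_arc_edges by simp
  qed
  moreover have "inj_on (\<lambda>A. arc_edge ` A) (eulerian_digraphs k b)"
    by (rule inj_onI) (simp add: inj_image_eq_iff[OF inj_arc_edge])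
  ultimately show ?thesis unfolding D_def by (simp add: card_image)
qed

section \<open>Two diagonal edges\<close>

lemma partial_transpose_Un: "partial_transpose (X \<union> Y) = partial_transpose X \<union> partial_transpose Y"
  unfolding partial_transpose_def by blast

lemma partial_transpose_edge: "partial_transpose {{(i, j), (k, l)}} = {{(k, j), (i, l)}}"
proof (intro equalityI subsetI)
  fix e assume "e \<in> partial_transpose {{(i, j), (k, l)}}"
  then obtain i' j' k' l' where "e = {(k', j'), (i', l')}" "{(i', j'), (k', l')} = {(i, j), (k, l)}"
    unfolding partial_transpose_def by blast
  then show "e \<in> {{(k, j), (i, l)}}" by (auto simp: doubleton_eq_iff insert_commute)
qed (auto simp: partial_transpose_def)

lemma degree_pos_iff: "finite E \<Longrightarrow> 0 < degree E v \<longleftrightarrow> (\<exists>e\<in>E. v \<in> e)"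
  unfolding degree_def by (auto simp: card_gt_0_iff)

definition rectangle :: "nat set \<Rightarrow> nat set \<Rightarrow> vertex set set" where
  "rectangle R C = {{(i, j), (k, l)} | i j k l. i \<in> R \<and> k \<in> R \<and> j \<in> C \<and> l \<in> C \<and> i \<noteq> k \<and> j \<noteq> l}"

lemma rectangle_pairs:
  assumes "i \<noteq> k" "j \<noteq> l"
  shows "rectangle {i, k} {j, l} = {{(i, j), (k, l)}, {(k, j), (i, l)}}"
  unfolding rectangle_def using assms by (auto simp: insert_commute)

lemma partial_transpose_rectangle_pairs:
  "partial_transpose {{(i, j), (k, l)}, {(k, j), (i, l)}} = {{(i, j), (k, l)}, {(k, j), (i, l)}}"
  using partial_transpose_Un[of "{{(i, j), (k, l)}}" "{{(k, j), (i, l)}}"]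
  by (auto simp: partial_transpose_edge insert_commute)

lemma rectangle_satisfies_degree_criterion:
  assumes "R \<in> doubletons {1..a}" "C \<in> doubletons {1..b}"
  shows "grid_graph a b (rectangle R C) \<and> card (rectangle R C) = 2 \<and>
    (\<forall>e\<in>rectangle R C. diagonal_edge e) \<and> degree_criterion a b (rectangle R C)"
proof -
  obtain i k j l where R: "R = {i, k}" "i \<noteq> k" "i \<in> {1..a}" "k \<in> {1..a}"
    and C: "C = {j, l}" "j \<noteq> l" "j \<in> {1..b}" "l \<in> {1..b}"
    using assms by (auto simp: doubletons_def card_2_iff)
  have "{(i, j), (k, l)} \<noteq> {(k, j), (i, l)}" using R(2) C(2) by (auto simp: doubleton_eq_iff)
  moreover have "diagonal_edge {(i, j), (k, l)}" "diagonal_edge {(k, j), (i, l)}"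
    unfolding diagonal_edge_def using R(2) C(2) by blast+
  ultimately show ?thesis
    using R C unfolding grid_graph_def grid_def degree_criterion_def
    by (simp add: rectangle_pairs partial_transpose_rectangle_pairs)
qed

lemma Union_rectangle: "R \<in> doubletons S \<Longrightarrow> C \<in> doubletons T \<Longrightarrow> \<Union>(rectangle R C) = R \<times> C"
  by (auto simp: doubletons_def card_2_iff rectangle_pairs)

lemma degree_criterion_two_diagonal_edges:
  assumes "grid_graph a b E" "card E = 2" "\<forall>e\<in>E. diagonal_edge e" "degree_criterion a b E"
  obtains R C where "R \<in> doubletons {1..a}" "C \<in> doubletons {1..b}" "E = rectangle R C"
proof -
  obtain e1 e2 where E: "E = {e1, e2}" using assms(2) by (auto simp: card_2_iff)
  then have "diagonal_edge e1" "diagonal_edge e2" using assms(3) by simp_all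
  then obtain i j k l i' j' k' l' where e1: "e1 = {(i, j), (k, l)}" "i \<noteq> k" "j \<noteq> l"
    and e2: "e2 = {(i', j'), (k', l')}"
    unfolding diagonal_edge_def by blast
  have grid: "i \<in> {1..a}" "k \<in> {1..a}" "j \<in> {1..b}" "l \<in> {1..b}"
    using assms(1) E e1 unfolding grid_graph_def grid_def by auto
  have ptE: "partial_transpose E = {{(k, j), (i, l)}, {(k', j'), (i', l')}}"
    using partial_transpose_Un[of "{e1}" "{e2}"] E e1(1) e2
    by (simp add: partial_transpose_edge insert_commute)
  have "v \<in> {(k', j'), (i', l')}" if v: "v \<in> e1" for v
  proof -
    have "v \<in> grid a b" using v assms(1) E unfolding grid_graph_def by auto
    then have "degree (partial_transpose E) v = degree E v"
      using assms(4) unfolding degree_criterion_def by simp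
    also have "0 < degree E v" using degree_pos_iff[of E v] v E by auto
    finally obtain f where "f \<in> partial_transpose E" "v \<in> f"
      using degree_pos_iff[of "partial_transpose E" v] ptE by auto
    moreover have "v \<notin> {(k, j), (i, l)}" using v e1 by auto
    ultimately show ?thesis using ptE by auto
  qed
  then have "{(i, j), (k, l)} = {(k', j'), (i', l')}" using e1 by (auto simp: doubleton_eq_iff)
  then have "e2 = {(k, j), (i, l)}" using e2 by (auto simp: doubleton_eq_iff)
  then have "E = rectangle {i, k} {j, l}" using E e1 by (simp add: rectangle_pairs)
  moreover have "{i, k} \<in> doubletons {1..a}" "{j, l} \<in> doubletons {1..b}"
    using grid e1 by (auto simp: doubletons_def)
  ultimately show ?thesis using that by blast
qed

lemma D_two_edges: "D 2 a b = (a choose 2) * (b choose 2)"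
proof -
  let ?RC = "doubletons {1..a} \<times> doubletons {1..b}"
  have "{E. grid_graph a b E \<and> card E = 2 \<and> (\<forall>e\<in>E. diagonal_edge e) \<and> degree_criterion a b E}
      = (\<lambda>(R, C). rectangle R C) ` ?RC"
  proof (intro equalityI subsetI)
    fix E
    assume "E \<in> {E. grid_graph a b E \<and> card E = 2 \<and> (\<forall>e\<in>E. diagonal_edge e) \<and> degree_criterion a b E}"
    then obtain R C where "R \<in> doubletons {1..a}" "C \<in> doubletons {1..b}" "E = rectangle R C"
      using degree_criterion_two_diagonal_edges by blast
    then show "E \<in> (\<lambda>(R, C). rectangle R C) ` ?RC" by (intro rev_image_eqI[of "(R, C)"]) simp_all
  next
    fix E assume "E \<in> (\<lambda>(R, C). rectangle R C) ` ?RC"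
    then obtain R C where "R \<in> doubletons {1..a}" "C \<in> doubletons {1..b}" "E = rectangle R C"
      by blast
    then show "E \<in> {E. grid_graph a b E \<and> card E = 2 \<and> (\<forall>e\<in>E. diagonal_edge e) \<and>
      degree_criterion a b E}"
      using rectangle_satisfies_degree_criterion by simp
  qed
  moreover have "inj_on (\<lambda>(R, C). rectangle R C) ?RC"
  proof (rule inj_onI, clarify)
    fix R C R' C' assume RC: "R \<in> doubletons {1..a}" "C \<in> doubletons {1..b}"
      "R' \<in> doubletons {1..a}" "C' \<in> doubletons {1..b}" "rectangle R C = rectangle R' C'"
    then have "R \<times> C = R' \<times> C'" using Union_rectangle[of R _ C] Union_rectangle[of R' _ C'] by simp
    moreover have "R \<noteq> {}" "C \<noteq> {}" using RC(1,2) by (auto simp: doubletons_def)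
    ultimately show "R = R' \<and> C = C'" by (simp add: times_eq_iff)
  qed
  ultimately show ?thesis
    unfolding D_def by (simp add: card_image card_cartesian_product card_doubletons)
qed

theorem mainTheorem17:
  fixes a b :: nat
  assumes "a \<ge> 2" and "b \<ge> 2"
  shows "D 2 a b = (a choose 2) * (b choose 2) \<and>
         D 3 2 b = 2 * (b choose 3) \<and>
         D 4 2 b = 3 * (b choose 3) + 9 * (b choose 4)"
proof -
  have "D 3 2 b = 2 * (b choose 3)" "D 4 2 b = 3 * (b choose 3) + 9 * (b choose 4)"
    by (simp_all add: D_two_rows_eq_card_eulerian_digraphs card_eulerian_digraphs_3
        card_eulerian_digraphs_4)
  then show ?thesis by (simp add: D_two_edges)
qed

end
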